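(* Let $k$ be an integer with $1 \le k \leq 3$. If a non-empty graph $T$ is a $\mathsf{TJ}_k$-graph and $T$ does not contain a diamond ($K_4$ minus one edge) as an induced subgraph, then $T$ is a maximum $\mathsf{TJ}_k$-graph.
   Context: Graphs are finite, simple, undirected; non-empty means having at least one vertex. $\mathsf{TJ}_k(G)$ is the graph on the cliques of $G$ of size $k$ where $C, C'$ are adjacent iff $|C \setminus C'| = |C' \setminus C| = 1$. $T$ is a $\mathsf{TJ}_k$-graph if $T \cong \mathsf{TJ}_k(G)$ for some graph $G$, and a maximum $\mathsf{TJ}_k$-graph if $T \cong \mathsf{TJ}_k(G)$ for some $G$ with $\omega(G) = k$ ($\omega$ = maximum clique size). *)

theory Defs
  imports Main
begin

definition graph :: "'a set \<Rightarrow> 'a set set \<Rightarrow> bool" where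
  "graph V E \<longleftrightarrow> finite V \<and> (\<forall>e\<in>E. \<exists>u v. u \<noteq> v \<and> e = {u, v} \<and> u \<in> V \<and> v \<in> V)"

definition clique :: "'a set \<Rightarrow> 'a set set \<Rightarrow> 'a set \<Rightarrow> bool" where
  "clique V E C \<longleftrightarrow> C \<subseteq> V \<and> (\<forall>u\<in>C. \<forall>v\<in>C. u \<noteq> v \<longrightarrow> {u, v} \<in> E)"

definition k_cliques :: "nat \<Rightarrow> 'a set \<Rightarrow> 'a set set \<Rightarrow> 'a set set" where
  "k_cliques k V E = {C. clique V E C \<and> card C = k}"

definition clique_number :: "'a set \<Rightarrow> 'a set set \<Rightarrow> nat" where
  "clique_number V E = Max {card C | C. clique V E C}"

definition TJ_vertices :: "nat \<Rightarrow> 'a set \<Rightarrow> 'a set set \<Rightarrow> 'a set set" where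
  "TJ_vertices k V E = k_cliques k V E"

definition TJ_edges :: "nat \<Rightarrow> 'a set \<Rightarrow> 'a set set \<Rightarrow> 'a set set set" where
  "TJ_edges k V E = {{C, C'} | C C'. C \<in> k_cliques k V E \<and> C' \<in> k_cliques k V E \<and>
                        card (C - C') = 1 \<and> card (C' - C) = 1}"

definition graph_iso :: "'a set \<Rightarrow> 'a set set \<Rightarrow> 'b set \<Rightarrow> 'b set set \<Rightarrow> bool" where
  "graph_iso V1 E1 V2 E2 \<longleftrightarrow> (\<exists>f. bij_betw f V1 V2 \<and>
      (\<forall>u\<in>V1. \<forall>v\<in>V1. {u, v} \<in> E1 \<longleftrightarrow> {f u, f v} \<in> E2))"

text \<open>T is a TJ_k-graph if T is isomorphic to TJ_k(G) for some finite simple graph G.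
  Since every finite graph is isomorphic to one on natural numbers, G ranges over
  graphs with vertices in nat.\<close>
definition is_TJ_graph :: "nat \<Rightarrow> 'a set \<Rightarrow> 'a set set \<Rightarrow> bool" where
  "is_TJ_graph k V E \<longleftrightarrow> (\<exists>(GV :: nat set) GE. graph GV GE \<and>
      graph_iso V E (TJ_vertices k GV GE) (TJ_edges k GV GE))"

definition is_max_TJ_graph :: "nat \<Rightarrow> 'a set \<Rightarrow> 'a set set \<Rightarrow> bool" where
  "is_max_TJ_graph k V E \<longleftrightarrow> (\<exists>(GV :: nat set) GE. graph GV GE \<and> clique_number GV GE = k \<and>
      graph_iso V E (TJ_vertices k GV GE) (TJ_edges k GV GE))"

definition has_induced_diamond :: "'a set \<Rightarrow> 'a set set \<Rightarrow> bool" where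
  "has_induced_diamond V E \<longleftrightarrow> (\<exists>a b c d. a \<in> V \<and> b \<in> V \<and> c \<in> V \<and> d \<in> V \<and>
      distinct [a, b, c, d] \<and>
      {a, b} \<in> E \<and> {a, c} \<in> E \<and> {a, d} \<in> E \<and> {b, c} \<in> E \<and> {b, d} \<in> E \<and> {c, d} \<notin> E)"

end

theory Submission
  imports Defs "HOL-Library.Nat_Bijection"
begin

text \<open>For k = 1 the TJ-graph is complete, and the graph may be replaced by its edgeless
  version.  For k \<in> {2, 3}, diamond-freeness of TJ_k(G) forces every k-clique contained in a
  (k+1)-clique K to have all its TJ-neighbours inside K; so these k-cliques form a component
  K_{k+1} of TJ_k(G), K is unique, and every other k-clique meets K in at most one vertex.
  Now delete all edges lying in (k+1)-cliques and, for every (k+1)-clique K, add a sunflower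
  of fresh vertices: a core of k - 1 vertices and one petal for each k-clique of K.  The k-cliques
  of a sunflower (core plus petal) again form a K_{k+1}, the remaining k-cliques are unchanged,
  and the new graph has no (k+1)-clique.\<close>

definition tj_adj :: "'a set \<Rightarrow> 'a set \<Rightarrow> bool" where
  "tj_adj C D \<longleftrightarrow> card (C - D) = 1 \<and> card (D - C) = 1"

lemma tj_adjI: "A - B = {x} \<Longrightarrow> B - A = {y} \<Longrightarrow> tj_adj A B"
  by (simp add: tj_adj_def)

lemma tj_adjE:
  assumes "tj_adj A B"
  obtains x y where "A - B = {x}" "B - A = {y}"
  using assms by (auto simp: tj_adj_def card_1_singleton_iff)

lemma tj_adj_sym: "tj_adj A B \<longleftrightarrow> tj_adj B A"
  by (auto simp: tj_adj_def)

lemma not_tj_adj_refl: "\<not> tj_adj A A"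
  by (simp add: tj_adj_def)

lemma not_tj_adj_if_disjoint: "A \<inter> B = {} \<Longrightarrow> card A \<noteq> 1 \<Longrightarrow> \<not> tj_adj A B"
  by (simp add: tj_adj_def Diff_triv)

lemma tj_adj_if_subsets_of_Suc_card:
  assumes K: "finite K" "card K = Suc n" and C: "C \<subseteq> K" "card C = n" and D: "D \<subseteq> K" "card D = n"
    and "C \<noteq> D"
  shows "tj_adj C D"
proof -
  have "card (A - B) = 1" if "A \<subseteq> K" "B \<subseteq> K" "card A = n" "card B = n" "A \<noteq> B" for A B
  proof -
    have fin: "finite A" "finite B" using that K finite_subset by auto
    have "card (A - B) \<le> card (K - B)"
      using that K by (intro card_mono) auto
    also have "card (K - B) = 1"
      using that K fin by (simp add: card_Diff_subset)
    finally have "card (A - B) \<le> 1" .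
    moreover have "\<not> A \<subseteq> B" using that fin card_subset_eq by metis
    then have "card (A - B) \<noteq> 0" using fin by auto
    ultimately show ?thesis by linarith
  qed
  then show ?thesis using assms by (simp add: tj_adj_def)
qed

lemma in_k_cliques: "C \<in> k_cliques m V E \<longleftrightarrow> clique V E C \<and> card C = m"
  by (simp add: k_cliques_def)

lemma clique_subset: "clique V E K \<Longrightarrow> C \<subseteq> K \<Longrightarrow> clique V E C"
  unfolding clique_def by blast

lemma clique_mono: "clique V E Q \<Longrightarrow> E \<subseteq> E' \<Longrightarrow> clique V E' Q"
  unfolding clique_def by blast

lemma in_TJ_edges_iff:
  assumes "C \<in> k_cliques k V E" "D \<in> k_cliques k V E"
  shows "{C, D} \<in> TJ_edges k V E \<longleftrightarrow> tj_adj C D"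
  using assms unfolding TJ_edges_def tj_adj_def by (auto simp: doubleton_eq_iff)

lemma graph_iso_trans:
  assumes "graph_iso V1 E1 V2 E2" "graph_iso V2 E2 V3 E3"
  shows "graph_iso V1 E1 V3 E3"
proof -
  obtain f where f: "bij_betw f V1 V2" "\<forall>u\<in>V1. \<forall>v\<in>V1. {u, v} \<in> E1 \<longleftrightarrow> {f u, f v} \<in> E2"
    using assms(1) by (auto simp: graph_iso_def)
  obtain g where g: "bij_betw g V2 V3" "\<forall>u\<in>V2. \<forall>v\<in>V2. {u, v} \<in> E2 \<longleftrightarrow> {g u, g v} \<in> E3"
    using assms(2) by (auto simp: graph_iso_def)
  have "bij_betw (g \<circ> f) V1 V3" using f(1) g(1) by (rule bij_betw_trans)
  moreover have "f u \<in> V2" if "u \<in> V1" for u using f(1) that by (auto simp: bij_betw_def)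
  ultimately show ?thesis using f(2) g(2) unfolding graph_iso_def by (intro exI[of _ "g \<circ> f"]) auto
qed

lemma graph_iso_has_induced_diamond:
  assumes "graph_iso V E V' E'" "has_induced_diamond V' E'"
  shows "has_induced_diamond V E"
proof -
  obtain f where f: "bij_betw f V V'" and edges: "\<forall>u\<in>V. \<forall>v\<in>V. {u, v} \<in> E \<longleftrightarrow> {f u, f v} \<in> E'"
    using assms(1) by (auto simp: graph_iso_def)
  define h where "h = inv_into V f"
  have h: "h x \<in> V" "f (h x) = x" if "x \<in> V'" for x
    using that f unfolding h_def by (auto simp: bij_betw_inv_into_right bij_betw_def inv_into_into)
  have "{h x, h y} \<in> E \<longleftrightarrow> {x, y} \<in> E'" if "x \<in> V'" "y \<in> V'" for x y
    using edges h[OF that(1)] h[OF that(2)] by metis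
  moreover have "distinct [h a, h b, h c, h d]" if "distinct [a, b, c, d]"
      "a \<in> V'" "b \<in> V'" "c \<in> V'" "d \<in> V'" for a b c d
    using that h by (metis distinct_length_2_or_more distinct_singleton)
  ultimately show ?thesis
    using assms(2) h(1) unfolding has_induced_diamond_def by (metis (no_types, lifting))
qed

lemma graph_iso_TJ_if_bij:
  assumes bij: "bij_betw \<phi> (k_cliques k V E) (k_cliques k V' E')"
    and adj: "\<And>C D. C \<in> k_cliques k V E \<Longrightarrow> D \<in> k_cliques k V E \<Longrightarrow>
      tj_adj (\<phi> C) (\<phi> D) \<longleftrightarrow> tj_adj C D"
  shows "graph_iso (TJ_vertices k V E) (TJ_edges k V E) (TJ_vertices k V' E') (TJ_edges k V' E')"
proof -
  have "{C, D} \<in> TJ_edges k V E \<longleftrightarrow> {\<phi> C, \<phi> D} \<in> TJ_edges k V' E'"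
    if "C \<in> k_cliques k V E" "D \<in> k_cliques k V E" for C D
    using that adj bij_betwE[OF bij] by (simp add: in_TJ_edges_iff)
  then show ?thesis
    using bij unfolding graph_iso_def TJ_vertices_def by blast
qed

lemma clique_number_eqI:
  assumes "finite V" "clique V E Q" "card Q = k" "\<And>Q. clique V E Q \<Longrightarrow> card Q \<le> k"
  shows "clique_number V E = k"
proof -
  have "{card C | C. clique V E C} \<subseteq> card ` Pow V" by (auto simp: clique_def)
  then have "finite {card C | C. clique V E C}" using assms(1) finite_subset by blast
  then show ?thesis unfolding clique_number_def using assms(2-4) by (intro Max_eqI) auto
qed

lemma k_cliques_1_no_edges: "k_cliques 1 V E = k_cliques 1 V {}"
  by (auto simp: k_cliques_def clique_def card_1_singleton_iff)

lemma is_max_TJ_graph_1: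
  fixes GV :: "nat set"
  assumes "graph GV GE" "k_cliques 1 GV GE \<noteq> {}"
    and "graph_iso V E (TJ_vertices 1 GV GE) (TJ_edges 1 GV GE)"
  shows "is_max_TJ_graph 1 V E"
proof -
  have graph: "graph GV {}" using assms(1) by (simp add: graph_def)
  have "k_cliques 1 GV {} \<noteq> {}" using assms(2) k_cliques_1_no_edges by metis
  then obtain Q where Q: "clique GV {} Q" "card Q = 1" by (auto simp: k_cliques_def)
  have "card Q \<le> 1" if "clique GV {} Q" for Q
  proof -
    have "finite Q" using that assms(1) by (auto simp: clique_def graph_def intro: finite_subset)
    then show ?thesis using that by (auto simp: clique_def card_le_Suc0_iff_eq)
  qed
  then have "clique_number GV {} = 1"
    using graph Q by (intro clique_number_eqI) (auto simp: graph_def)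
  moreover have "TJ_vertices 1 GV GE = TJ_vertices 1 GV {}" "TJ_edges 1 GV GE = TJ_edges 1 GV {}"
    unfolding TJ_vertices_def TJ_edges_def k_cliques_1_no_edges[of GV GE] by simp_all
  ultimately show ?thesis
    using graph assms(3) unfolding is_max_TJ_graph_def by auto
qed

locale diamond_free_TJ =
  fixes GV :: "nat set" and GE :: "nat set set" and k :: nat
  assumes graph: "graph GV GE" and two_le_k: "2 \<le> k" and k_le_3: "k \<le> 3"
    and diamond_free: "\<not> has_induced_diamond (TJ_vertices k GV GE) (TJ_edges k GV GE)"
begin

abbreviation "KC \<equiv> k_cliques k GV GE"
abbreviation "KS \<equiv> k_cliques (Suc k) GV GE"

lemma finite_GV: "finite GV"
  using graph by (simp add: graph_def)

lemma finite_k_clique: "C \<in> k_cliques m GV GE \<Longrightarrow> finite C"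
  using finite_GV by (auto simp: k_cliques_def clique_def intro: finite_subset)

lemma Suc_clique_minus_in_KC: "K \<in> KS \<Longrightarrow> x \<in> K \<Longrightarrow> K - {x} \<in> KC"
  using finite_k_clique by (auto simp: in_k_cliques intro: clique_subset)

lemma tj_adj_common_neighbours:
  assumes "a \<in> KC" "b \<in> KC" "c \<in> KC" "d \<in> KC" "distinct [a, b, c, d]"
    and "tj_adj a b" "tj_adj a c" "tj_adj a d" "tj_adj b c" "tj_adj b d"
  shows "tj_adj c d"
proof (rule ccontr)
  assume "\<not> tj_adj c d"
  then have "{a, b} \<in> TJ_edges k GV GE \<and> {a, c} \<in> TJ_edges k GV GE \<and>
      {a, d} \<in> TJ_edges k GV GE \<and> {b, c} \<in> TJ_edges k GV GE \<and>
      {b, d} \<in> TJ_edges k GV GE \<and> {c, d} \<notin> TJ_edges k GV GE"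
    using assms by (simp add: in_TJ_edges_iff)
  then have "has_induced_diamond KC (TJ_edges k GV GE)"
    unfolding has_induced_diamond_def using assms(1-5) by blast
  then show False using diamond_free by (simp add: TJ_vertices_def)
qed

text \<open>If D were not inside K, then with C - D = {u}, D - C = {e}, K = C + {w} and
  t \<in> C - {u}, the cliques C, K - {u}, D, K - {t} would form a diamond: D and K - {t} differ
  in both t and e.\<close>
lemma tj_adj_subset_Suc_clique:
  assumes K: "K \<in> KS" "C \<subseteq> K" and C: "C \<in> KC" and D: "D \<in> KC" and "tj_adj C D"
  shows "D \<subseteq> K"
proof (rule ccontr)
  assume "\<not> D \<subseteq> K"
  obtain u e where u: "C - D = {u}" and e: "D - C = {e}"
    using \<open>tj_adj C D\<close> by (rule tj_adjE)
  have D_eq: "D = insert e (C - {u})" and "u \<in> C" "e \<notin> C" using u e by blast+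
  have "e \<notin> K" using \<open>\<not> D \<subseteq> K\<close> D_eq K(2) by blast
  have "card (K - C) = 1"
    using K C finite_k_clique by (simp add: in_k_cliques card_Diff_subset)
  then obtain w where "K - C = {w}" by (auto simp: card_1_singleton_iff)
  then have K_eq: "K = insert w C" and "w \<notin> C" using K(2) by blast+
  have "card (C - {u}) = k - 1"
    using \<open>u \<in> C\<close> C finite_k_clique by (simp add: in_k_cliques)
  then have "0 < card (C - {u})" using two_le_k by linarith
  then obtain t where "t \<in> C" "t \<noteq> u" by (auto simp: card_gt_0_iff)
  define C1 C2 where "C1 = K - {u}" and "C2 = K - {t}"
  have cliques: "C1 \<in> KC" "C2 \<in> KC"
    unfolding C1_def C2_def using K \<open>u \<in> C\<close> \<open>t \<in> C\<close> by (auto intro: Suc_clique_minus_in_KC)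
  note facts = \<open>u \<in> C\<close> \<open>e \<notin> C\<close> \<open>w \<notin> C\<close> \<open>t \<in> C\<close> \<open>t \<noteq> u\<close> \<open>e \<notin> K\<close>
  have "tj_adj C C1" by (rule tj_adjI[of _ _ u w]) (use facts in \<open>auto simp: C1_def K_eq\<close>)
  moreover have "tj_adj C C2" by (rule tj_adjI[of _ _ t w]) (use facts in \<open>auto simp: C2_def K_eq\<close>)
  moreover have "tj_adj C1 D"
    by (rule tj_adjI[of _ _ w e]) (use facts in \<open>auto simp: C1_def K_eq D_eq\<close>)
  moreover have "tj_adj C1 C2"
    by (rule tj_adjI[of _ _ t u]) (use facts in \<open>auto simp: C1_def C2_def K_eq\<close>)
  moreover have "distinct [C, C1, D, C2]"
    using facts by (auto simp: C1_def C2_def K_eq D_eq)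
  ultimately have "tj_adj D C2"
    using \<open>tj_adj C D\<close> by (intro tj_adj_common_neighbours[OF C cliques(1) D cliques(2)])
  then obtain x where "D - C2 = {x}" by (rule tj_adjE)
  moreover have "t \<in> D - C2" "e \<in> D - C2" using facts by (auto simp: C2_def D_eq)
  ultimately show False using facts by auto
qed

lemma Suc_clique_unique:
  assumes K: "K \<in> KS" "C \<subseteq> K" and K': "K' \<in> KS" "C \<subseteq> K'" and C: "C \<in> KC"
  shows "K = K'"
proof -
  have "card (K' - C) = 1"
    using K' C finite_k_clique by (simp add: in_k_cliques card_Diff_subset)
  then obtain y where y: "K' - C = {y}" by (auto simp: card_1_singleton_iff)
  obtain c where c: "c \<in> C" using C two_le_k by (fastforce simp: in_k_cliques)
  have "tj_adj C (K' - {c})" by (rule tj_adjI[of _ _ c y]) (use y c K' in auto)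
  then have "K' - {c} \<subseteq> K"
    using tj_adj_subset_Suc_clique[OF K C Suc_clique_minus_in_KC[OF K'(1)]] K' c by blast
  then have "K' \<subseteq> K" using K c by blast
  then show ?thesis
    using K K' finite_k_clique card_subset_eq by (metis in_k_cliques)
qed

definition extendable :: "nat set set" where
  "extendable = {C \<in> KC. \<exists>K\<in>KS. C \<subseteq> K}"

definition Suc_clique_of :: "nat set \<Rightarrow> nat set" where
  "Suc_clique_of C = (THE K. K \<in> KS \<and> C \<subseteq> K)"

lemma Suc_clique_of_eq: "C \<in> KC \<Longrightarrow> K \<in> KS \<Longrightarrow> C \<subseteq> K \<Longrightarrow> Suc_clique_of C = K"
  unfolding Suc_clique_of_def using Suc_clique_unique by (intro the_equality) blast+

lemma Suc_clique_of:
  assumes "C \<in> extendable" shows "Suc_clique_of C \<in> KS" "C \<subseteq> Suc_clique_of C"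
  using assms Suc_clique_of_eq by (auto simp: extendable_def)

lemma extendable_KC: "C \<in> extendable \<Longrightarrow> C \<in> KC"
  by (simp add: extendable_def)

lemma tj_adj_extendable:
  assumes "C \<in> extendable" "D \<in> KC" "tj_adj C D"
  shows "D \<in> extendable" "Suc_clique_of D = Suc_clique_of C"
proof -
  have "D \<subseteq> Suc_clique_of C"
    using Suc_clique_of[OF assms(1)] extendable_KC[OF assms(1)] assms(2,3)
    by (rule tj_adj_subset_Suc_clique)
  then show "D \<in> extendable" "Suc_clique_of D = Suc_clique_of C"
    using assms(1,2) Suc_clique_of Suc_clique_of_eq by (auto simp: extendable_def)
qed

text \<open>This is where k \<le> 3 is needed: for k = 3, a second common vertex would give a
  TJ-neighbour of D inside K.\<close>
lemma non_extendable_meets_Suc_clique: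
  assumes D: "D \<in> KC - extendable" and K: "K \<in> KS"
    and ab: "a \<in> D" "b \<in> D" "a \<in> K" "b \<in> K"
  shows "a = b"
proof (rule ccontr)
  assume "a \<noteq> b"
  have "\<not> D \<subseteq> K" using D K by (auto simp: extendable_def)
  then obtain e where e: "e \<in> D" "e \<notin> K" by blast
  have cards: "finite D" "card D = k" "finite K" "card K = Suc k"
    using D K finite_k_clique by (auto simp: in_k_cliques)
  consider "k = 2" | "k = 3" using two_le_k k_le_3 by linarith
  then show False
  proof cases
    case 1
    then have "card {a, b} = card D" using cards \<open>a \<noteq> b\<close> by simp
    then have "D = {a, b}"
      using card_subset_eq[OF cards(1), of "{a, b}"] ab by simp
    then show False using e ab by auto
  next
    case 2
    have "e \<noteq> a" "e \<noteq> b" using ab e by auto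
    then have "card {a, b, e} = card D" using cards \<open>a \<noteq> b\<close> 2 by simp
    then have D_eq: "D = {a, b, e}"
      using card_subset_eq[OF cards(1), of "{a, b, e}"] ab e by simp
    have "0 < card (K - {a, b})" using cards ab \<open>a \<noteq> b\<close> 2 by (simp add: card_Diff_subset)
    then obtain x where x: "x \<in> K" "x \<noteq> a" "x \<noteq> b" by (auto simp: card_gt_0_iff)
    have C: "{a, b, x} \<in> KC"
      using K x ab \<open>a \<noteq> b\<close> 2 by (auto simp: in_k_cliques intro: clique_subset)
    have "tj_adj {a, b, x} D" by (rule tj_adjI[of _ _ x e]) (use x e ab in \<open>auto simp: D_eq\<close>)
    moreover have "{a, b, x} \<subseteq> K" using x ab by blast
    ultimately have "D \<subseteq> K" using tj_adj_subset_Suc_clique[OF K _ C] D by blast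
    then show False using \<open>\<not> D \<subseteq> K\<close> by blast
  qed
qed

definition free_edges :: "nat set set" where
  "free_edges = {e \<in> GE. \<forall>K\<in>KS. \<not> e \<subseteq> K}"

definition new_vertex :: "nat set \<Rightarrow> nat \<Rightarrow> nat" where
  "new_vertex S i = Suc (Max (insert 0 GV)) + prod_encode (set_encode S, i)"

definition core :: "nat set \<Rightarrow> nat set" where
  "core K = new_vertex K ` {..<k - 1}"

definition petal :: "nat set \<Rightarrow> nat" where
  "petal C = new_vertex C (k - 1)"

definition new_clique :: "nat set \<Rightarrow> nat set" where
  "new_clique C = (if C \<in> extendable then insert (petal C) (core (Suc_clique_of C)) else C)"

definition new_vertices :: "nat set" where
  "new_vertices = GV \<union> \<Union> (new_clique ` extendable)"

definition new_edges :: "nat set set" where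
  "new_edges = free_edges \<union> (\<Union>C\<in>extendable. {e. e \<subseteq> new_clique C \<and> card e = 2})"

lemma new_vertex_eq_iff:
  "finite S \<Longrightarrow> finite S' \<Longrightarrow> new_vertex S i = new_vertex S' j \<longleftrightarrow> S = S' \<and> i = j"
  by (auto simp: new_vertex_def set_encode_eq)

lemma new_vertex_notin_GV: "new_vertex S i \<notin> GV"
proof
  assume "new_vertex S i \<in> GV"
  then have "new_vertex S i \<le> Max (insert 0 GV)" using finite_GV by simp
  then show False by (simp add: new_vertex_def)
qed

lemma finite_extendable: "C \<in> extendable \<Longrightarrow> finite C" "C \<in> extendable \<Longrightarrow> finite (Suc_clique_of C)"
  using Suc_clique_of extendable_KC finite_k_clique by blast+

lemma new_clique_extendable:
  "C \<in> extendable \<Longrightarrow> new_clique C = insert (petal C) (core (Suc_clique_of C))"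
  by (simp add: new_clique_def)

lemma new_clique_non_extendable: "C \<notin> extendable \<Longrightarrow> new_clique C = C"
  by (simp add: new_clique_def)

lemma new_clique_subset_GV: "C \<in> KC \<Longrightarrow> C \<notin> extendable \<Longrightarrow> new_clique C \<subseteq> GV"
  by (simp add: new_clique_non_extendable in_k_cliques clique_def)

lemma petal_notin_core: "finite C \<Longrightarrow> finite K \<Longrightarrow> petal C \<notin> core K"
  by (auto simp: petal_def core_def new_vertex_eq_iff)

lemma card_new_clique:
  assumes "C \<in> extendable" shows "finite (new_clique C)" "card (new_clique C) = k"
proof -
  have "card (core (Suc_clique_of C)) = k - 1"
    unfolding core_def using finite_extendable[OF assms]
    by (subst card_image) (auto simp: inj_on_def new_vertex_eq_iff)
  then show "finite (new_clique C)" "card (new_clique C) = k"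
    using assms finite_extendable[OF assms] petal_notin_core two_le_k
    by (auto simp: new_clique_extendable core_def)
qed

lemma new_clique_disjoint_GV: "C \<in> extendable \<Longrightarrow> new_clique C \<inter> GV = {}"
  by (auto simp: new_clique_extendable petal_def core_def new_vertex_notin_GV)

lemma petal_in_new_clique_iff:
  assumes "C \<in> extendable" "D \<in> KC"
  shows "petal C \<in> new_clique D \<longleftrightarrow> D = C"
proof (cases "D \<in> extendable")
  case True
  then show ?thesis using assms finite_extendable petal_notin_core
    by (auto simp: new_clique_extendable petal_def new_vertex_eq_iff)
next
  case False
  then have "new_clique D \<subseteq> GV" using assms(2) by (rule new_clique_subset_GV[rotated])
  then show ?thesis using False assms(1) new_vertex_notin_GV by (auto simp: petal_def)
qed

lemma core_vertex_in_new_clique_iff: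
  assumes "C \<in> extendable" "K \<in> KS" "i < k - 1"
  shows "new_vertex K i \<in> new_clique C \<longleftrightarrow> Suc_clique_of C = K"
  using assms finite_extendable[OF assms(1)] finite_k_clique[OF assms(2)]
  by (auto simp: new_clique_extendable petal_def core_def new_vertex_eq_iff)

lemma new_clique_disjoint:
  assumes "C \<in> extendable" "D \<in> extendable" "Suc_clique_of C \<noteq> Suc_clique_of D"
  shows "new_clique C \<inter> new_clique D = {}"
  using assms finite_extendable[OF assms(1)] finite_extendable[OF assms(2)]
  by (auto simp: new_clique_extendable petal_def core_def new_vertex_eq_iff)

lemma tj_adj_new_clique_iff:
  assumes "C \<in> KC" "D \<in> KC"
  shows "tj_adj (new_clique C) (new_clique D) \<longleftrightarrow> tj_adj C D"
proof -
  have separated: "\<not> tj_adj (new_clique C) (new_clique D) \<and> \<not> tj_adj C D"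
    if C: "C \<in> extendable" and D: "D \<in> KC" "D \<notin> extendable \<or> Suc_clique_of D \<noteq> Suc_clique_of C"
    for C D
  proof
    have "new_clique C \<inter> new_clique D = {}"
      using new_clique_disjoint_GV[OF C] new_clique_disjoint[OF C] new_clique_subset_GV D by blast
    then show "\<not> tj_adj (new_clique C) (new_clique D)"
      using card_new_clique[OF C] two_le_k by (intro not_tj_adj_if_disjoint) auto
    show "\<not> tj_adj C D" using tj_adj_extendable[OF C D(1)] D(2) by auto
  qed
  have sibling: "tj_adj (new_clique C) (new_clique D) \<and> tj_adj C D"
    if C: "C \<in> extendable" and D: "D \<in> extendable" "Suc_clique_of D = Suc_clique_of C"
      and "C \<noteq> D" for C D
  proof
    have "petal C \<noteq> petal D"
      using \<open>C \<noteq> D\<close> finite_extendable C D by (simp add: petal_def new_vertex_eq_iff)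
    then show "tj_adj (new_clique C) (new_clique D)"
      using finite_extendable C D petal_notin_core
      by (intro tj_adjI[of _ _ "petal C" "petal D"]) (auto simp: new_clique_extendable)
    show "tj_adj C D"
      using Suc_clique_of[OF C] Suc_clique_of[OF D(1)] C D \<open>C \<noteq> D\<close> extendable_KC
      by (intro tj_adj_if_subsets_of_Suc_card[where K = "Suc_clique_of C" and n = k])
        (auto simp: in_k_cliques intro: finite_k_clique)
  qed
  show ?thesis
  proof (cases "C \<in> extendable"; cases "D \<in> extendable")
    assume "C \<in> extendable" "D \<in> extendable"
    then show ?thesis
      using separated[of C D] sibling[of C D] assms not_tj_adj_refl by blast
  next
    assume "C \<in> extendable" "D \<notin> extendable"
    then show ?thesis using separated[of C D] assms by blast
  next
    assume "C \<notin> extendable" "D \<in> extendable"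
    then show ?thesis using separated[of D C] assms tj_adj_sym by blast
  next
    assume "C \<notin> extendable" "D \<notin> extendable"
    then show ?thesis by (simp add: new_clique_non_extendable)
  qed
qed

lemma free_edges_subset_GE: "free_edges \<subseteq> GE"
  by (auto simp: free_edges_def)

lemma free_edge_subset_GV: "e \<in> free_edges \<Longrightarrow> e \<subseteq> GV"
  using graph by (auto simp: free_edges_def graph_def)

lemma new_edge_iff:
  assumes "a \<noteq> b"
  shows "{a, b} \<in> new_edges \<longleftrightarrow>
    {a, b} \<in> free_edges \<or> (\<exists>C\<in>extendable. a \<in> new_clique C \<and> b \<in> new_clique C)"
  using assms by (auto simp: new_edges_def)

lemma new_neighbour_outside_GV:
  assumes Q: "clique new_vertices new_edges Q" and "q \<in> Q" "q \<notin> GV" "v \<in> Q" "v \<noteq> q"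
  obtains C where "C \<in> extendable" "q \<in> new_clique C" "v \<in> new_clique C"
proof -
  have "{q, v} \<in> new_edges" using Q assms(2-5) by (auto simp: clique_def)
  moreover have "{q, v} \<notin> free_edges" using free_edge_subset_GV assms(3) by blast
  ultimately show ?thesis using that new_edge_iff[of q v] assms(5) by auto
qed

lemma new_clique_containing_petal:
  assumes Q: "clique new_vertices new_edges Q" and C: "C \<in> extendable" "petal C \<in> Q"
  shows "Q \<subseteq> new_clique C"
proof
  fix v assume "v \<in> Q"
  show "v \<in> new_clique C"
  proof (cases "v = petal C")
    case True
    then show ?thesis using C by (simp add: new_clique_extendable)
  next
    case False
    have "petal C \<notin> GV" by (simp add: petal_def new_vertex_notin_GV)
    then obtain D where "D \<in> extendable" "petal C \<in> new_clique D" "v \<in> new_clique D"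
      by (rule new_neighbour_outside_GV[OF Q C(2) _ \<open>v \<in> Q\<close> False])
    then show ?thesis using petal_in_new_clique_iff C(1) extendable_KC by blast
  qed
qed

lemma clique_new_graph_cases:
  assumes Q: "clique new_vertices new_edges Q"
  shows "clique GV free_edges Q \<or> (\<exists>C\<in>extendable. Q \<subseteq> new_clique C)"
proof (cases "Q \<subseteq> GV")
  case True
  have "{u, v} \<in> free_edges" if "u \<in> Q" "v \<in> Q" "u \<noteq> v" for u v
  proof -
    have "{u, v} \<in> new_edges" using Q that by (simp add: clique_def)
    moreover have "u \<notin> new_clique C" if "C \<in> extendable" for C
      using new_clique_disjoint_GV[OF that] True \<open>u \<in> Q\<close> by blast
    ultimately show ?thesis using new_edge_iff[OF \<open>u \<noteq> v\<close>] by blast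
  qed
  then show ?thesis using True by (simp add: clique_def)
next
  case False
  then obtain q where q: "q \<in> Q" "q \<notin> GV" by blast
  then obtain C0 where C0: "C0 \<in> extendable" "q \<in> new_clique C0"
    using Q unfolding clique_def new_vertices_def by blast
  show ?thesis
  proof (cases "\<exists>C\<in>extendable. petal C \<in> Q")
    case True
    then show ?thesis using new_clique_containing_petal[OF Q] by blast
  next
    case no_petal: False
    define K where "K = Suc_clique_of C0"
    have "q \<in> core K" using C0 q no_petal by (auto simp: new_clique_extendable K_def)
    then obtain i where i: "q = new_vertex K i" "i < k - 1" by (auto simp: core_def)
    have "v \<in> new_clique C0" if v: "v \<in> Q" for v
    proof (cases "v = q")
      case False
      then obtain C where C: "C \<in> extendable" "q \<in> new_clique C" "v \<in> new_clique C"
        by (rule new_neighbour_outside_GV[OF Q q v])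
      have "Suc_clique_of C = K"
        using core_vertex_in_new_clique_iff[OF C(1) _ i(2)] Suc_clique_of(1)[OF C0(1)] C(2) i(1)
        unfolding K_def by blast
      moreover have "v \<noteq> petal C" using no_petal C(1) v by blast
      ultimately have "v \<in> core K" using C by (simp add: new_clique_extendable)
      then show ?thesis using C0 by (simp add: new_clique_extendable K_def)
    qed (use C0 in simp)
    then show ?thesis using C0 by blast
  qed
qed

lemma card_free_edges_clique_le_1:
  assumes "clique GV free_edges Q" "K \<in> KS" "Q \<subseteq> K"
  shows "card Q \<le> 1"
proof -
  have "a = b" if "a \<in> Q" "b \<in> Q" for a b
  proof (rule ccontr)
    assume "a \<noteq> b"
    then have "{a, b} \<in> free_edges" using assms(1) that by (simp add: clique_def)
    then show False using assms(2,3) that by (auto simp: free_edges_def)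
  qed
  moreover have "finite Q" using assms(2,3) finite_k_clique finite_subset by blast
  ultimately show ?thesis by (simp add: card_le_Suc0_iff_eq)
qed

lemma non_extendable_clique_free_edges:
  assumes "C \<in> KC - extendable" shows "clique GV free_edges C"
  unfolding clique_def
proof (intro conjI ballI impI)
  show "C \<subseteq> GV" using assms by (simp add: in_k_cliques clique_def)
  fix u v assume "u \<in> C" "v \<in> C" "u \<noteq> v"
  then have "{u, v} \<in> GE" using assms by (simp add: in_k_cliques clique_def)
  moreover have "\<not> {u, v} \<subseteq> K" if "K \<in> KS" for K
    using non_extendable_meets_Suc_clique[OF assms that \<open>u \<in> C\<close> \<open>v \<in> C\<close>] \<open>u \<noteq> v\<close> by blast
  ultimately show "{u, v} \<in> free_edges" by (simp add: free_edges_def)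
qed

lemma card_clique_new_graph_le:
  assumes Q: "clique new_vertices new_edges Q" shows "card Q \<le> k"
  using clique_new_graph_cases[OF Q]
proof
  assume Q': "clique GV free_edges Q"
  show ?thesis
  proof (rule ccontr)
    assume "\<not> card Q \<le> k"
    then obtain K where K: "K \<subseteq> Q" "card K = Suc k"
      by (metis not_less_eq_eq obtain_subset_with_card_n)
    have "clique GV free_edges K" using Q' K(1) by (rule clique_subset)
    then have "K \<in> KS" using K(2) clique_mono free_edges_subset_GE by (auto simp: in_k_cliques)
    then have "card K \<le> 1" using card_free_edges_clique_le_1 \<open>clique GV free_edges K\<close> by blast
    then show False using K(2) two_le_k by linarith
  qed
next
  assume "\<exists>C\<in>extendable. Q \<subseteq> new_clique C"
  then show ?thesis using card_new_clique card_mono by metis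
qed

lemma k_cliques_new_graph:
  "k_cliques k new_vertices new_edges = (KC - extendable) \<union> new_clique ` extendable"
proof (intro equalityI subsetI)
  fix Q assume "Q \<in> k_cliques k new_vertices new_edges"
  then have Q: "clique new_vertices new_edges Q" "card Q = k" by (auto simp: k_cliques_def)
  from clique_new_graph_cases[OF Q(1)]
  show "Q \<in> (KC - extendable) \<union> new_clique ` extendable"
  proof
    assume Q': "clique GV free_edges Q"
    then have "Q \<in> KC" using Q(2) clique_mono free_edges_subset_GE by (auto simp: in_k_cliques)
    moreover have "Q \<notin> extendable"
      using card_free_edges_clique_le_1[OF Q'] Q(2) two_le_k by (auto simp: extendable_def)
    ultimately show ?thesis by blast
  next
    assume "\<exists>C\<in>extendable. Q \<subseteq> new_clique C"
    then obtain C where "C \<in> extendable" "Q \<subseteq> new_clique C" by blast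
    then have "Q = new_clique C" using card_new_clique card_subset_eq Q(2) by metis
    then show ?thesis using \<open>C \<in> extendable\<close> by blast
  qed
next
  fix Q assume "Q \<in> (KC - extendable) \<union> new_clique ` extendable"
  then consider "Q \<in> KC - extendable" | C where "C \<in> extendable" "Q = new_clique C" by blast
  then show "Q \<in> k_cliques k new_vertices new_edges"
  proof cases
    case 1
    then have "clique new_vertices new_edges Q"
      using non_extendable_clique_free_edges
      by (auto simp: clique_def new_vertices_def new_edges_def)
    then show ?thesis using 1 by (simp add: k_cliques_def)
  next
    case 2
    then have "clique new_vertices new_edges Q"
      using new_edge_iff by (auto simp: clique_def new_vertices_def)
    then show ?thesis using 2 card_new_clique by (simp add: k_cliques_def)
  qed
qed

lemma finite_new_vertices: "finite new_vertices"
proof -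
  have "KC \<subseteq> Pow GV" by (auto simp: in_k_cliques clique_def)
  then have "finite KC" using finite_GV finite_subset by blast
  then have "finite extendable" by (rule finite_subset[rotated]) (auto simp: extendable_def)
  then show ?thesis using finite_GV card_new_clique by (simp add: new_vertices_def)
qed

lemma graph_new_graph: "graph new_vertices new_edges"
  unfolding graph_def
proof (intro conjI ballI finite_new_vertices)
  fix e assume "e \<in> new_edges"
  then consider "e \<in> GE" | C where "C \<in> extendable" "e \<subseteq> new_clique C" "card e = 2"
    by (auto simp: new_edges_def free_edges_def)
  then show "\<exists>u v. u \<noteq> v \<and> e = {u, v} \<and> u \<in> new_vertices \<and> v \<in> new_vertices"
  proof cases
    case 1
    then show ?thesis using graph by (fastforce simp: graph_def new_vertices_def)
  next
    case 2
    then show ?thesis by (fastforce simp: card_2_iff new_vertices_def)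
  qed
qed

lemma bij_betw_new_clique: "bij_betw new_clique KC (k_cliques k new_vertices new_edges)"
proof (rule bij_betw_imageI)
  have "C = D" if "C \<in> KC" "D \<in> KC" "C \<in> extendable" "new_clique C = new_clique D" for C D
    using petal_in_new_clique_iff[of C D] new_clique_extendable[of C] that by auto
  then show "inj_on new_clique KC"
    by (metis inj_onI new_clique_non_extendable)
  have "KC = (KC - extendable) \<union> extendable" using extendable_KC by blast
  moreover have "new_clique ` (KC - extendable) = KC - extendable"
    by (simp add: new_clique_non_extendable)
  ultimately show "new_clique ` KC = k_cliques k new_vertices new_edges"
    unfolding k_cliques_new_graph by (metis image_Un)
qed

lemma clique_number_new_graph:
  assumes "KC \<noteq> {}" shows "clique_number new_vertices new_edges = k"
proof -
  obtain Q where "Q \<in> k_cliques k new_vertices new_edges"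
    using assms bij_betw_new_clique by (metis bij_betw_empty2 ex_in_conv)
  then show ?thesis
    using finite_new_vertices card_clique_new_graph_le
    by (intro clique_number_eqI[of _ _ Q]) (auto simp: k_cliques_def)
qed

lemma max_TJ_graph_if_iso:
  assumes "graph_iso V E (TJ_vertices k GV GE) (TJ_edges k GV GE)" "KC \<noteq> {}"
  shows "is_max_TJ_graph k V E"
proof -
  have "graph_iso (TJ_vertices k GV GE) (TJ_edges k GV GE)
      (TJ_vertices k new_vertices new_edges) (TJ_edges k new_vertices new_edges)"
    using bij_betw_new_clique tj_adj_new_clique_iff by (rule graph_iso_TJ_if_bij)
  then show ?thesis
    using assms graph_new_graph clique_number_new_graph graph_iso_trans
    unfolding is_max_TJ_graph_def by blast
qed

end

theorem proposition4p15:
  fixes k :: nat and V :: "'a set" and E :: "'a set set"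
  assumes "1 \<le> k" and "k \<le> 3"
    and "graph V E" and "V \<noteq> {}"
    and "is_TJ_graph k V E"
    and "\<not> has_induced_diamond V E"
  shows "is_max_TJ_graph k V E"
proof -
  obtain GV :: "nat set" and GE where G: "graph GV GE"
    and iso: "graph_iso V E (TJ_vertices k GV GE) (TJ_edges k GV GE)"
    using assms(5) unfolding is_TJ_graph_def by blast
  have cliques: "k_cliques k GV GE \<noteq> {}"
    using iso assms(4) by (auto simp: graph_iso_def bij_betw_def TJ_vertices_def)
  show ?thesis
  proof (cases "k = 1")
    case True
    then show ?thesis using is_max_TJ_graph_1 G cliques iso by blast
  next
    case False
    have "\<not> has_induced_diamond (TJ_vertices k GV GE) (TJ_edges k GV GE)"
      using graph_iso_has_induced_diamond[OF iso] assms(6) by blast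
    then have "diamond_free_TJ GV GE k"
      using G False assms(1,2) by unfold_locales auto
    then show ?thesis using iso cliques by (rule diamond_free_TJ.max_TJ_graph_if_iso)
  qed
qed

end
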